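(* Let $X$ be a time-homogeneous Markov chain on $\mathbf{R}$ with transition kernel $P$, arbitrary initial distribution, and renewal measure $U(B)=\sum_{n\ge0}\mathbf{P}\{X_n\in B\}$. Suppose there exists $A>0$ such that $\varepsilon:=\inf_{x\in\mathbf{R}}\mathbf{E}\min\{\xi(x),A\}>0$, and that $\delta:=\inf_{x\in\mathbf{R}}\mathbf{P}\{X_n>x\text{ for all }n\ge1\mid X_0=x\}>0$. Then $U(x,x+h]\le (A+h)/(\varepsilon\delta)$ for all $x\in\mathbf{R}$ and $h>0$; in particular $\sup_{k\in\mathbf{Z}}U(k,k+1]<\infty$.
   Context: $\xi(x)$ denotes a random variable distributed as the jump of the chain from $x$: $\mathbf{P}\{x+\xi(x)\in B\}=P(x,B)$. *)

theory Defs
  imports "HOL-Probability.Probability"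
begin

text \<open>Path measure (law of the whole trajectory (X_0, X_1, ...)) of the time-homogeneous
  Markov chain on the reals with initial distribution mu and transition kernel K,
  built with the library's Ionescu-Tulcea construction:
  X_0 has law mu and, given X_0..X_(i-1), X_i has law K (X_(i-1)).\<close>
definition markov_path :: "real measure \<Rightarrow> (real \<Rightarrow> real measure) \<Rightarrow> (nat \<Rightarrow> real) measure" where
  "markov_path \<mu> K =
     projective_family.lim UNIV
       (Ionescu_Tulcea.CI (\<lambda>i \<omega>. if i = 0 then \<mu> else K (\<omega> (i - 1))) (\<lambda>_. borel))
       (\<lambda>_. borel)"

definition renewal :: "real measure \<Rightarrow> (real \<Rightarrow> real measure) \<Rightarrow> real set \<Rightarrow> ennreal" where
  "renewal \<mu> K B = (\<Sum>n. emeasure (markov_path \<mu> K) {\<omega> \<in> space (markov_path \<mu> K). \<omega> n \<in> B})"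

end

theory Submission
  imports Defs
begin

text \<open>
  A bounded Lyapunov function bounds the renewal measure: if
  \<open>0 \<le> F \<le> C\<close> and \<open>1\<^sub>B + K F \<le> F\<close> pointwise, then
  \<open>P(X\<^sub>n \<in> B) + E F(X\<^sub>n\<^sub>+\<^sub>1) \<le> E F(X\<^sub>n)\<close>, and summing over \<open>n\<close> gives \<open>U(B) \<le> C\<close>.
  For the interval \<open>B = (x, t]\<close>, \<open>t = x + h\<close>, we take
  \<open>F(y) = c + (t + A - max y x) / \<epsilon>\<close> for \<open>y \<le> t\<close> and \<open>F(y) = c' g(y)\<close> for \<open>y > t\<close>,
  where \<open>g(y)\<close> is the probability of ever returning to \<open>(-\<infinity>, t]\<close> from \<open>y\<close>,
  \<open>c' = (A + h)/(\<epsilon> \<delta>)\<close> and \<open>c = (1 - \<delta>) c'\<close>.  The drift hypothesis makes the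
  affine part decrease by at least 1 per step taken from \<open>B\<close>; the escape
  hypothesis gives \<open>g(z) \<le> 1 - \<delta>\<close> for \<open>z > t\<close> (a path staying above \<open>z\<close> never
  returns below \<open>t\<close>), which is what glues the two parts together.
\<close>

locale real_kernel =
  fixes K :: "real \<Rightarrow> real measure"
  assumes kernel: "K \<in> borel \<rightarrow>\<^sub>M prob_algebra borel"
begin

lemma kernel_subprob[measurable]: "K \<in> borel \<rightarrow>\<^sub>M subprob_algebra borel"
  using measurable_prob_algebraD[OF kernel] .

lemma prob_space_kernel: "prob_space (K y)" and sets_kernel: "sets (K y) = sets borel"
proof -
  have "K y \<in> space (prob_algebra borel)" using measurable_space[OF kernel] by simp
  then show "prob_space (K y)" "sets (K y) = sets borel" unfolding space_prob_algebra by blast+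
qed

lemma emeasure_kernel_space[simp]: "emeasure (K y) (space (K y)) = 1"
  using prob_space.emeasure_space_1[OF prob_space_kernel] .

lemma nn_integral_kernel_const: "(\<integral>\<^sup>+w. c \<partial>K y) = c"
  by simp

text \<open>Its iterate \<open>(killed z ^^ j) (\<lambda>_. 1) y\<close>
  is the probability that the chain started at \<open>y\<close> stays above \<open>z\<close> during the
  first \<open>j\<close> steps (lemma \<open>survival_marginal\<close> below).\<close>

definition killed :: "real \<Rightarrow> (real \<Rightarrow> ennreal) \<Rightarrow> real \<Rightarrow> ennreal" where
  "killed z f y = (\<integral>\<^sup>+w. indicator {z<..} w * f w \<partial>K y)"

lemma killed_measurable[measurable]:
  assumes [measurable]: "f \<in> borel_measurable borel"
  shows "killed z f \<in> borel_measurable borel"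
  unfolding killed_def[abs_def] by measurable

lemma killed_iterate_measurable[measurable]:
  "f \<in> borel_measurable borel \<Longrightarrow> (killed z ^^ j) f \<in> borel_measurable borel"
  by (induction j) simp_all

text \<open>Probability of entering \<open>(-\<infinity>, t]\<close> within \<open>k\<close> steps, and of ever entering
  it (the return probability \<open>g\<close> of the proof idea).\<close>

primrec hit_within :: "real \<Rightarrow> nat \<Rightarrow> real \<Rightarrow> ennreal" where
  "hit_within t 0 y = (if y \<le> t then 1 else 0)"
| "hit_within t (Suc k) y = (if y \<le> t then 1 else \<integral>\<^sup>+w. hit_within t k w \<partial>K y)"

definition hit_prob :: "real \<Rightarrow> real \<Rightarrow> ennreal" where
  "hit_prob t y = (SUP k. hit_within t k y)"

lemma hit_within_measurable[measurable]: "hit_within t k \<in> borel_measurable borel"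
proof (induction k)
  case 0 show ?case by (simp add: hit_within.simps(1)[abs_def])
next
  case (Suc k)
  note [measurable] = Suc.IH
  show ?case unfolding hit_within.simps(2)[abs_def] by measurable
qed

lemma hit_within_le_1: "hit_within t k y \<le> 1"
proof (induction k arbitrary: y)
  case (Suc k)
  have "(\<integral>\<^sup>+w. hit_within t k w \<partial>K y) \<le> (\<integral>\<^sup>+w. 1 \<partial>K y)" by (intro nn_integral_mono Suc.IH)
  then show ?case by (simp add: nn_integral_kernel_const)
qed simp

lemma hit_within_Suc_ge: "hit_within t k y \<le> hit_within t (Suc k) y"
proof (induction k arbitrary: y)
  case (Suc k)
  have "(\<integral>\<^sup>+w. hit_within t k w \<partial>K y) \<le> (\<integral>\<^sup>+w. hit_within t (Suc k) w \<partial>K y)"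
    by (intro nn_integral_mono Suc.IH)
  then show ?case by (simp del: hit_within.simps(2) add: hit_within.simps(2)[of t k] hit_within.simps(2)[of t "Suc k"])
qed simp

lemma hit_prob_measurable[measurable]: "hit_prob t \<in> borel_measurable borel"
  unfolding hit_prob_def[abs_def] by measurable

lemma hit_prob_le_1: "hit_prob t y \<le> 1"
  unfolding hit_prob_def by (rule SUP_least) (rule hit_within_le_1)

lemma hit_prob_below:
  assumes "y \<le> t"
  shows "hit_prob t y = 1"
proof -
  have "hit_within t k y = 1" for k using assms by (cases k) simp_all
  then show ?thesis unfolding hit_prob_def by simp
qed

text \<open>Above \<open>t\<close> the return probability is harmonic (first-step analysis, by
  monotone convergence).\<close>

lemma hit_prob_harmonic:
  assumes "t < y"
  shows "hit_prob t y = (\<integral>\<^sup>+w. hit_prob t w \<partial>K y)"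
proof -
  have "hit_prob t y = (SUP k. hit_within t (Suc k) y)"
    unfolding hit_prob_def
  proof (rule antisym)
    show "(SUP k. hit_within t k y) \<le> (SUP k. hit_within t (Suc k) y)"
      by (rule SUP_mono) (use hit_within_Suc_ge in blast)
    show "(SUP k. hit_within t (Suc k) y) \<le> (SUP k. hit_within t k y)"
      by (rule SUP_mono) blast
  qed
  also have "\<dots> = (SUP k. \<integral>\<^sup>+w. hit_within t k w \<partial>K y)"
    using assms by simp
  also have "\<dots> = (\<integral>\<^sup>+w. hit_prob t w \<partial>K y)"
    unfolding hit_prob_def
  proof (rule nn_integral_monotone_convergence_SUP[symmetric])
    show "incseq (\<lambda>k. hit_within t k)"
      by (rule incseq_SucI) (unfold le_fun_def, use hit_within_Suc_ge in blast)
  qed (simp add: measurable_cong_sets[OF sets_kernel refl])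
  finally show ?thesis .
qed

text \<open>Started above \<open>z > t\<close>, entering \<open>(-\<infinity>, t]\<close> within \<open>k\<close> steps and staying
  above \<open>z\<close> during \<open>k\<close> steps are disjoint events.\<close>

lemma hit_within_plus_survival_le_1:
  assumes "t < z" "t < y"
  shows "hit_within t k y + (killed z ^^ k) (\<lambda>_. 1) y \<le> 1"
  using assms(2)
proof (induction k arbitrary: y)
  case (Suc k)
  have "hit_within t (Suc k) y + (killed z ^^ Suc k) (\<lambda>_. 1) y
      = (\<integral>\<^sup>+w. hit_within t k w + indicator {z<..} w * (killed z ^^ k) (\<lambda>_. 1) w \<partial>K y)"
    using Suc.prems
    by (simp add: killed_def nn_integral_add measurable_cong_sets[OF sets_kernel refl])
  also have "\<dots> \<le> (\<integral>\<^sup>+w. 1 \<partial>K y)"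
  proof (rule nn_integral_mono)
    fix w
    show "hit_within t k w + indicator {z<..} w * (killed z ^^ k) (\<lambda>_. 1) w \<le> 1"
      using Suc.IH[of w] hit_within_le_1[of t k w] assms(1)
      by (cases "z < w") simp_all
  qed
  finally show ?case by (simp add: nn_integral_kernel_const)
qed simp

end
section \<open>Finite-dimensional laws of the path measure\<close>

lemma Ionescu_Tulcea_markov:
  fixes K :: "real \<Rightarrow> real measure"
  assumes K: "K \<in> borel \<rightarrow>\<^sub>M prob_algebra borel" and \<nu>: "prob_space \<nu>" "sets \<nu> = sets borel"
  shows "Ionescu_Tulcea (\<lambda>i \<omega>. if i = 0 then \<nu> else K (\<omega> (i - 1))) (\<lambda>_. borel)"
proof (rule Ionescu_Tulcea.intro, goal_cases)
  case (1 i)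
  show ?case
  proof (cases "i = 0")
    case True
    have "\<nu> \<in> space (subprob_algebra borel)"
      using \<nu> by (simp add: space_subprob_algebra prob_space_imp_subprob_space)
    then show ?thesis using True by simp
  next
    case False
    have "(\<lambda>\<omega>. K (\<omega> (i - 1))) \<in> Pi\<^sub>M {0..<i} (\<lambda>_. borel) \<rightarrow>\<^sub>M subprob_algebra borel"
      by (rule measurable_compose[where f="\<lambda>\<omega>. \<omega> (i - 1)" and N=borel,
            OF measurable_component_singleton measurable_prob_algebraD[OF K]])
         (use \<open>i \<noteq> 0\<close> in simp_all)
    then show ?thesis using False by simp
  qed
next
  case (2 i x)
  have "K (x (i - 1)) \<in> space (prob_algebra borel)"
    using measurable_space[OF K, of "x (i - 1)"] by simp
  then show ?case using \<nu> unfolding space_prob_algebra by simp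
qed

locale real_markov_chain = real_kernel K for K :: "real \<Rightarrow> real measure" +
  fixes \<nu> :: "real measure"
  assumes initial: "prob_space \<nu>" "sets \<nu> = sets borel"
begin

sublocale IT: Ionescu_Tulcea "\<lambda>i \<omega>. if i = 0 then \<nu> else K (\<omega> (i - 1))" "\<lambda>_. borel"
  by (rule Ionescu_Tulcea_markov[OF kernel initial])

declare IT.C.simps[simp del]

text \<open>\<open>marginal n\<close> is the law of \<open>(X\<^sub>0, \<dots>, X\<^sub>n\<^sub>-\<^sub>1)\<close>.\<close>

abbreviation marginal :: "nat \<Rightarrow> (nat \<Rightarrow> real) measure" where
  "marginal n \<equiv> IT.C 0 n (\<lambda>_. undefined)"

lemma empty_path_in_space: "(\<lambda>_. undefined) \<in> space (PiM {0..<0} (\<lambda>_. borel :: real measure))"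
  by (simp add: space_PiM PiE_def extensional_def)

lemma space_marginal: "space (marginal n) = space (PiM {0..<n} (\<lambda>_. borel))"
  using IT.space_C[OF empty_path_in_space, of n] by simp

lemma sets_marginal: "sets (marginal n) = sets (PiM {0..<n} (\<lambda>_. borel))"
  using IT.sets_C[OF empty_path_in_space, of n] by simp

text \<open>Law of \<open>X\<^sub>0\<close>, and the Markov property in integrated form: the last
  coordinate of \<open>marginal (n + 2)\<close> is drawn from \<open>K (\<omega> n)\<close>.\<close>

lemma nn_integral_marginal_initial:
  assumes [measurable]: "f \<in> borel_measurable borel"
  shows "(\<integral>\<^sup>+\<omega>. f (\<omega> 0) \<partial>marginal (Suc 0)) = (\<integral>\<^sup>+y. f y \<partial>\<nu>)"
proof -
  have "marginal (Suc 0) = IT.eP 0 (\<lambda>_. undefined)"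
    using bind_return[OF IT.measurable_eP empty_path_in_space] by (simp add: IT.C.simps)
  then show ?thesis
    using empty_path_in_space by (simp add: IT.nn_integral_eP)
qed

lemma nn_integral_marginal_step:
  assumes g[measurable]: "g \<in> borel_measurable (PiM {0..<Suc (Suc n)} (\<lambda>_. borel))"
  shows "(\<integral>\<^sup>+\<omega>. g \<omega> \<partial>marginal (Suc (Suc n)))
       = (\<integral>\<^sup>+\<omega>. (\<integral>\<^sup>+y. g (fun_upd \<omega> (Suc n) y) \<partial>K (\<omega> n)) \<partial>marginal (Suc n))"
proof -
  have "marginal (Suc (Suc n)) = marginal (Suc n) \<bind> IT.eP (Suc n)"
    by (simp add: IT.C.simps)
  then have "(\<integral>\<^sup>+\<omega>. g \<omega> \<partial>marginal (Suc (Suc n)))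
      = (\<integral>\<^sup>+\<omega>. (\<integral>\<^sup>+y. g y \<partial>IT.eP (Suc n) \<omega>) \<partial>marginal (Suc n))"
    by (simp only:) (rule nn_integral_bind[OF g],
        simp only: measurable_cong_sets[OF sets_marginal refl] IT.measurable_eP)
  also have "\<dots> = (\<integral>\<^sup>+\<omega>. (\<integral>\<^sup>+y. g (fun_upd \<omega> (Suc n) y) \<partial>K (\<omega> n)) \<partial>marginal (Suc n))"
    by (rule nn_integral_cong) (simp add: space_marginal IT.nn_integral_eP)
  finally show ?thesis .
qed

lemma emeasure_path_cylinder:
  assumes X: "X \<in> sets (PiM {0..<n} (\<lambda>_. borel))"
  shows "emeasure (markov_path \<nu> K) (prod_emb UNIV (\<lambda>_. borel) {0..<n} X) = emeasure (marginal n) X"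
proof -
  have "emeasure (markov_path \<nu> K) (prod_emb UNIV (\<lambda>_. borel) {0..<n} X) = emeasure (IT.CI {0..<n}) X"
    unfolding markov_path_def by (rule IT.lim[OF _ X]) simp
  also have "\<dots> = emeasure (marginal n) (prod_emb {0..<n} (\<lambda>_. borel) {0..<n} X)"
    by (rule IT.emeasure_CI[OF _ X]) simp
  also have "prod_emb {0..<n} (\<lambda>_. borel) {0..<n} X = X"
    using sets.sets_into_space[OF X] by (intro prod_emb_id) (simp add: space_PiM)
  finally show ?thesis .
qed

lemma emeasure_path_at:
  assumes [measurable]: "B \<in> sets borel"
  shows "emeasure (markov_path \<nu> K) {\<omega> \<in> space (markov_path \<nu> K). \<omega> n \<in> B}
       = (\<integral>\<^sup>+\<omega>. indicator B (\<omega> n) \<partial>marginal (Suc n))"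
proof -
  define X where "X = {\<omega> \<in> space (PiM {0..<Suc n} (\<lambda>_. borel :: real measure)). \<omega> n \<in> B}"
  have X: "X \<in> sets (PiM {0..<Suc n} (\<lambda>_. borel))"
    unfolding X_def by measurable
  have "{\<omega> \<in> space (markov_path \<nu> K). \<omega> n \<in> B} = prod_emb UNIV (\<lambda>_. borel) {0..<Suc n} X"
    by (auto simp: markov_path_def prod_emb_def X_def space_PiM PiE_def extensional_def)
  then have "emeasure (markov_path \<nu> K) {\<omega> \<in> space (markov_path \<nu> K). \<omega> n \<in> B} = emeasure (marginal (Suc n)) X"
    using emeasure_path_cylinder[OF X] by simp
  also have "\<dots> = (\<integral>\<^sup>+\<omega>. indicator X \<omega> \<partial>marginal (Suc n))"
    using X by (simp add: sets_marginal)
  also have "\<dots> = (\<integral>\<^sup>+\<omega>. indicator B (\<omega> n) \<partial>marginal (Suc n))"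
    by (rule nn_integral_cong) (auto simp: space_marginal X_def split: split_indicator)
  finally show ?thesis .
qed

section \<open>The Lyapunov criterion for the renewal measure\<close>

text \<open>If \<open>F \<le> C\<close> and \<open>1\<^sub>B + K F \<le> F\<close>, then \<open>U(B) \<le> C\<close>: with \<open>a\<^sub>n = E F(X\<^sub>n)\<close> one has
  \<open>P(X\<^sub>n \<in> B) + a\<^sub>n\<^sub>+\<^sub>1 \<le> a\<^sub>n\<close>, so every partial sum of \<open>U(B)\<close> is at most \<open>a\<^sub>0 \<le> C\<close>.\<close>

lemma renewal_le_lyapunov:
  fixes F :: "real \<Rightarrow> ennreal" and C :: ennreal
  assumes B[measurable]: "B \<in> sets borel" and F[measurable]: "F \<in> borel_measurable borel"
    and F_le: "\<And>y. F y \<le> C" and F_drift: "\<And>y. indicator B y + (\<integral>\<^sup>+w. F w \<partial>K y) \<le> F y"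
  shows "renewal \<nu> K B \<le> C"
proof -
  define a where "a n = (\<integral>\<^sup>+\<omega>. F (\<omega> n) \<partial>marginal (Suc n))" for n
  define p where "p n = (\<integral>\<^sup>+\<omega>. indicator B (\<omega> n) \<partial>marginal (Suc n))" for n
  have decrease: "p n + a (Suc n) \<le> a n" for n
  proof -
    have "a (Suc n) = (\<integral>\<^sup>+\<omega>. (\<integral>\<^sup>+y. F (fun_upd \<omega> (Suc n) y (Suc n)) \<partial>K (\<omega> n)) \<partial>marginal (Suc n))"
      unfolding a_def by (rule nn_integral_marginal_step) measurable
    also have "\<dots> = (\<integral>\<^sup>+\<omega>. (\<integral>\<^sup>+y. F y \<partial>K (\<omega> n)) \<partial>marginal (Suc n))"
      by simp
    finally have "p n + a (Suc n) = (\<integral>\<^sup>+\<omega>. indicator B (\<omega> n) + (\<integral>\<^sup>+y. F y \<partial>K (\<omega> n)) \<partial>marginal (Suc n))"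
      unfolding p_def by (subst nn_integral_add) (auto simp: measurable_cong_sets[OF sets_marginal refl])
    also have "\<dots> \<le> a n"
      unfolding a_def by (intro nn_integral_mono F_drift)
    finally show ?thesis .
  qed
  have partial_sums: "(\<Sum>i<N. p i) + a N \<le> a 0" for N
  proof (induction N)
    case (Suc N)
    have "(\<Sum>i<Suc N. p i) + a (Suc N) = (\<Sum>i<N. p i) + (p N + a (Suc N))"
      by (simp add: add.assoc)
    also have "\<dots> \<le> (\<Sum>i<N. p i) + a N" by (rule add_left_mono[OF decrease])
    also have "\<dots> \<le> a 0" by (rule Suc.IH)
    finally show ?case .
  qed simp
  have "a 0 = (\<integral>\<^sup>+y. F y \<partial>\<nu>)" unfolding a_def by (rule nn_integral_marginal_initial[OF F])
  also have "\<dots> \<le> (\<integral>\<^sup>+y. C \<partial>\<nu>)" by (intro nn_integral_mono F_le)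
  also have "\<dots> = C" using prob_space.emeasure_space_1[OF initial(1)] by simp
  finally have a0_le: "a 0 \<le> C" .
  have "(\<Sum>i<N. p i) \<le> C" for N
  proof -
    have "(\<Sum>i<N. p i) \<le> (\<Sum>i<N. p i) + a N" by simp
    also have "\<dots> \<le> C" using partial_sums[of N] a0_le by simp
    finally show ?thesis .
  qed
  moreover have "renewal \<nu> K B = (SUP N. \<Sum>i<N. p i)"
    unfolding renewal_def p_def emeasure_path_at[OF B] by (rule suminf_eq_SUP)
  ultimately show ?thesis by (simp add: SUP_least)
qed

definition stays_above :: "real \<Rightarrow> nat \<Rightarrow> (nat \<Rightarrow> real) set" where
  "stays_above z j = {\<omega> \<in> space (PiM {0..<Suc j} (\<lambda>_. borel)). \<forall>m\<in>{1..j}. z < \<omega> m}"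

lemma stays_above_sets[measurable]: "stays_above z j \<in> sets (PiM {0..<Suc j} (\<lambda>_. borel))"
  unfolding stays_above_def
proof (rule sets.sets_Collect_finite_All)
  fix m assume "m \<in> {1..j}"
  then have [measurable]: "(\<lambda>\<omega>. \<omega> m) \<in> borel_measurable (PiM {0..<Suc j} (\<lambda>_. borel :: real measure))"
    by (intro measurable_component_singleton) auto
  show "{\<omega> \<in> space (PiM {0..<Suc j} (\<lambda>_. borel)). z < (\<omega> m::real)} \<in> sets (PiM {0..<Suc j} (\<lambda>_. borel))"
    by measurable
qed simp

lemma indicator_stays_above_Suc:
  assumes \<omega>: "\<omega> \<in> space (PiM {0..<Suc j} (\<lambda>_. borel :: real measure))"
  shows "indicator (stays_above z (Suc j)) (fun_upd \<omega> (Suc j) y)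
       = (indicator (stays_above z j) \<omega> * indicator {z<..} y :: ennreal)"
proof -
  have "fun_upd \<omega> (Suc j) y \<in> space (PiM {0..<Suc (Suc j)} (\<lambda>_. borel :: real measure))"
    using \<omega> by (auto simp: space_PiM PiE_def extensional_def)
  moreover have "(\<forall>m\<in>{1..Suc j}. z < (fun_upd \<omega> (Suc j) y) m) \<longleftrightarrow> (\<forall>m\<in>{1..j}. z < \<omega> m) \<and> z < y"
    by (auto simp: le_Suc_eq)
  ultimately have "(fun_upd \<omega> (Suc j) y \<in> stays_above z (Suc j)) = (\<omega> \<in> stays_above z j \<and> z < y)"
    unfolding stays_above_def using \<omega> by (simp only: mem_Collect_eq) blast
  then show ?thesis by (simp only: indicator_def) simp
qed

lemma survival_marginal:
  assumes "f \<in> borel_measurable borel"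
  shows "(\<integral>\<^sup>+\<omega>. indicator (stays_above z j) \<omega> * f (\<omega> j) \<partial>marginal (Suc j))
       = (\<integral>\<^sup>+y. (killed z ^^ j) f y \<partial>\<nu>)"
  using assms
proof (induction j arbitrary: f)
  case 0
  have "(\<integral>\<^sup>+\<omega>. indicator (stays_above z 0) \<omega> * f (\<omega> 0) \<partial>marginal (Suc 0))
      = (\<integral>\<^sup>+\<omega>. f (\<omega> 0) \<partial>marginal (Suc 0))"
    by (rule nn_integral_cong) (simp add: stays_above_def space_marginal)
  also have "\<dots> = (\<integral>\<^sup>+y. f y \<partial>\<nu>)" by (rule nn_integral_marginal_initial[OF 0])
  finally show ?case by simp
next
  case (Suc j)
  note [measurable] = Suc.prems
  have "(\<integral>\<^sup>+\<omega>. indicator (stays_above z (Suc j)) \<omega> * f (\<omega> (Suc j)) \<partial>marginal (Suc (Suc j)))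
      = (\<integral>\<^sup>+\<omega>. (\<integral>\<^sup>+y. indicator (stays_above z (Suc j)) (fun_upd \<omega> (Suc j) y)
              * f (fun_upd \<omega> (Suc j) y (Suc j)) \<partial>K (\<omega> j)) \<partial>marginal (Suc j))"
    by (rule nn_integral_marginal_step) measurable
  also have "\<dots> = (\<integral>\<^sup>+\<omega>. indicator (stays_above z j) \<omega> * killed z f (\<omega> j) \<partial>marginal (Suc j))"
  proof (rule nn_integral_cong)
    fix \<omega> assume "\<omega> \<in> space (marginal (Suc j))"
    then have \<omega>: "\<omega> \<in> space (PiM {0..<Suc j} (\<lambda>_. borel :: real measure))"
      by (simp add: space_marginal)
    have "(\<integral>\<^sup>+y. indicator (stays_above z (Suc j)) (fun_upd \<omega> (Suc j) y)
              * f (fun_upd \<omega> (Suc j) y (Suc j)) \<partial>K (\<omega> j))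
        = (\<integral>\<^sup>+y. indicator (stays_above z j) \<omega> * (indicator {z<..} y * f y) \<partial>K (\<omega> j))"
      by (rule nn_integral_cong) (simp add: indicator_stays_above_Suc[OF \<omega>] mult.assoc)
    also have "\<dots> = indicator (stays_above z j) \<omega> * killed z f (\<omega> j)"
      unfolding killed_def
      by (rule nn_integral_cmult) (simp add: measurable_cong_sets[OF sets_kernel refl])
    finally show "(\<integral>\<^sup>+y. indicator (stays_above z (Suc j)) (fun_upd \<omega> (Suc j) y)
              * f (fun_upd \<omega> (Suc j) y (Suc j)) \<partial>K (\<omega> j))
        = indicator (stays_above z j) \<omega> * killed z f (\<omega> j)" .
  qed
  also have "\<dots> = (\<integral>\<^sup>+y. (killed z ^^ j) (killed z f) y \<partial>\<nu>)"
    by (rule Suc.IH) measurable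
  also have "\<dots> = (\<integral>\<^sup>+y. (killed z ^^ Suc j) f y \<partial>\<nu>)"
    by (simp only: funpow_Suc_right comp_def)
  finally show ?case .
qed

lemma escape_le_survival:
  "emeasure (markov_path \<nu> K) {\<omega> \<in> space (markov_path \<nu> K). \<forall>n\<ge>1. z < \<omega> n}
    \<le> (\<integral>\<^sup>+y. (killed z ^^ j) (\<lambda>_. 1) y \<partial>\<nu>)"
proof -
  let ?cyl = "prod_emb UNIV (\<lambda>_. borel) {0..<Suc j} (stays_above z j)"
  have "{\<omega> \<in> space (markov_path \<nu> K). \<forall>n\<ge>1. z < \<omega> n} \<subseteq> ?cyl"
    by (auto simp: markov_path_def prod_emb_def stays_above_def space_PiM PiE_def extensional_def)
  moreover have "?cyl \<in> sets (markov_path \<nu> K)"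
    unfolding markov_path_def IT.PF.sets_lim by (rule measurable_prod_emb) simp_all
  ultimately have "emeasure (markov_path \<nu> K) {\<omega> \<in> space (markov_path \<nu> K). \<forall>n\<ge>1. z < \<omega> n}
      \<le> emeasure (markov_path \<nu> K) ?cyl"
    by (rule emeasure_mono)
  also have "\<dots> = emeasure (marginal (Suc j)) (stays_above z j)"
    by (rule emeasure_path_cylinder) simp
  also have "\<dots> = (\<integral>\<^sup>+\<omega>. indicator (stays_above z j) \<omega> * (\<lambda>_. 1) (\<omega> j) \<partial>marginal (Suc j))"
    by (simp add: sets_marginal)
  also have "\<dots> = (\<integral>\<^sup>+y. (killed z ^^ j) (\<lambda>_. 1) y \<partial>\<nu>)"
    by (rule survival_marginal) simp
  finally show ?thesis .
qed

end

section \<open>Escape from a level bounds the return probability\<close>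

context real_kernel
begin

lemma survival_ge_escape:
  assumes "\<delta> \<le> measure (markov_path (return borel z) K)
              {\<omega> \<in> space (markov_path (return borel z) K). \<forall>n\<ge>1. \<omega> n > z}"
  shows "ennreal \<delta> \<le> (killed z ^^ j) (\<lambda>_. 1) z"
proof -
  interpret chain: real_markov_chain K "return borel z"
    by (intro real_markov_chain.intro real_kernel_axioms real_markov_chain_axioms.intro
        prob_space_return) simp_all
  let ?M = "markov_path (return borel z) K"
  let ?S = "{\<omega> \<in> space ?M. \<forall>n\<ge>1. z < \<omega> n}"
  have "ennreal \<delta> \<le> ennreal (measure ?M ?S)" using assms by (intro ennreal_leI) simp
  also have "\<dots> \<le> emeasure ?M ?S"
    by (cases "emeasure ?M ?S = \<top>") (simp_all add: emeasure_eq_ennreal_measure)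
  also have "\<dots> \<le> (\<integral>\<^sup>+y. (killed z ^^ j) (\<lambda>_. 1) y \<partial>return borel z)"
    by (rule chain.escape_le_survival)
  also have "\<dots> = (killed z ^^ j) (\<lambda>_. 1) z"
    by (rule nn_integral_return) simp_all
  finally show ?thesis .
qed

lemma hit_prob_le_escape:
  assumes survive: "\<And>j. ennreal \<delta> \<le> (killed z ^^ j) (\<lambda>_. 1) z"
    and "0 \<le> \<delta>" "t < z"
  shows "hit_prob t z \<le> ennreal (1 - \<delta>)"
  unfolding hit_prob_def
proof (rule SUP_least)
  fix k
  have "hit_within t k z + ennreal \<delta> \<le> hit_within t k z + (killed z ^^ k) (\<lambda>_. 1) z"
    by (intro add_left_mono survive)
  also have "\<dots> \<le> 1" by (rule hit_within_plus_survival_le_1) (use \<open>t < z\<close> in auto)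
  finally have sum_le: "hit_within t k z + ennreal \<delta> \<le> 1" .
  then have "hit_within t k z \<noteq> \<top>" by (auto simp: top_unique)
  then obtain r where r: "hit_within t k z = ennreal r" "0 \<le> r" by (cases "hit_within t k z") auto
  then have "r + \<delta> \<le> 1"
    using sum_le \<open>0 \<le> \<delta>\<close> by (simp add: ennreal_plus[symmetric] del: ennreal_plus)
  then show "hit_within t k z \<le> ennreal (1 - \<delta>)" using r by (simp add: ennreal_leI)
qed

end
section \<open>The Lyapunov function for an interval\<close>

locale renewal_hypotheses = real_kernel K for K :: "real \<Rightarrow> real measure" +
  fixes A \<epsilon> \<delta> :: real
  assumes A_pos: "A > 0"
    and eps_pos: "\<epsilon> > 0"
    and eps_int: "\<And>x. integrable (K x) (\<lambda>y. min (y - x) A)"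
    and eps_bound: "\<And>x. \<epsilon> \<le> (\<integral>y. min (y - x) A \<partial>K x)"
    and delta_pos: "\<delta> > 0"
    and delta_bound: "\<And>x. \<delta> \<le> measure (markov_path (return borel x) K)
              {\<omega> \<in> space (markov_path (return borel x) K). \<forall>n\<ge>1. \<omega> n > x}"
begin

lemma hit_prob_above: "t < z \<Longrightarrow> hit_prob t z \<le> ennreal (1 - \<delta>)"
  using delta_pos by (intro hit_prob_le_escape survival_ge_escape delta_bound) simp_all

lemma delta_le_1: "\<delta> \<le> 1"
proof -
  have "ennreal \<delta> \<le> 1" using survival_ge_escape[OF delta_bound, of 0 0] by simp
  then show ?thesis by (simp add: ennreal_le_1)
qed

text \<open>By the
  drift hypothesis, one step from any \<open>y \<le> t\<close> lowers its mean by at least \<open>\<epsilon>\<close>,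
  since \<open>ramp t w \<le> (t + A - y) - min (w - y) A\<close>.\<close>

definition ramp :: "real \<Rightarrow> real \<Rightarrow> real" where
  "ramp t w = (if w \<le> t then t + A - w else 0)"

lemma ramp_nonneg: "0 \<le> ramp t w"
  using A_pos by (simp add: ramp_def)

lemma ramp_drift:
  assumes "y \<le> t"
  shows "integrable (K y) (ramp t)" and "(\<integral>w. ramp t w \<partial>K y) \<le> t + A - y - \<epsilon>"
proof -
  interpret Ky: prob_space "K y" by (rule prob_space_kernel)
  have [measurable]: "ramp t \<in> borel_measurable borel" unfolding ramp_def[abs_def] by measurable
  have ramp_le: "ramp t w \<le> (t + A - y) - min (w - y) A" for w
    using assms A_pos unfolding ramp_def by (auto simp: min_def)
  have int_bound: "integrable (K y) (\<lambda>w. (t + A - y) - min (w - y) A)"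
    using eps_int[of y] by simp
  show int_ramp: "integrable (K y) (ramp t)"
  proof (rule Bochner_Integration.integrable_bound[OF int_bound])
    show "ramp t \<in> borel_measurable (K y)" by (simp add: measurable_cong_sets[OF sets_kernel refl])
    show "AE w in K y. norm (ramp t w) \<le> norm ((t + A - y) - min (w - y) A)"
      using ramp_le ramp_nonneg by (auto intro!: AE_I2 order_trans[OF _ abs_ge_self])
  qed
  have "(\<integral>w. ramp t w \<partial>K y) \<le> (\<integral>w. (t + A - y) - min (w - y) A \<partial>K y)"
    by (rule integral_mono[OF int_ramp int_bound ramp_le])
  also have "\<dots> = (t + A - y) - (\<integral>w. min (w - y) A \<partial>K y)"
    using eps_int[of y] by (simp add: Ky.prob_space)
  also have "\<dots> \<le> t + A - y - \<epsilon>" using eps_bound[of y] by simp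
  finally show "(\<integral>w. ramp t w \<partial>K y) \<le> t + A - y - \<epsilon>" .
qed

context
  fixes x h :: real
  assumes h_pos: "h > 0"
begin

text \<open>The two constants \<open>c' = (A + h)/(\<epsilon> \<delta>)\<close> (the bound) and \<open>c = (1 - \<delta>) c'\<close>,
  chosen so that \<open>c + (h + A)/\<epsilon> = c'\<close>.\<close>

definition lyap_max :: real where "lyap_max = (A + h) / (\<epsilon> * \<delta>)"

definition lyap_base :: real where "lyap_base = lyap_max * (1 - \<delta>)"

lemma lyap_max_nonneg: "0 \<le> lyap_max"
  unfolding lyap_max_def using A_pos h_pos eps_pos delta_pos by simp

lemma lyap_base_nonneg: "0 \<le> lyap_base"
  unfolding lyap_base_def using lyap_max_nonneg delta_le_1 by simp

lemma lyap_base_plus: "lyap_base + (h + A) / \<epsilon> = lyap_max"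
  unfolding lyap_base_def lyap_max_def using eps_pos delta_pos by (simp add: field_simps)

definition lyap :: "real \<Rightarrow> ennreal" where
  "lyap y = (if y \<le> x + h then ennreal (lyap_base + (x + h + A - max y x) / \<epsilon>)
             else ennreal lyap_max * hit_prob (x + h) y)"

lemma lyap_measurable[measurable]: "lyap \<in> borel_measurable borel"
  unfolding lyap_def[abs_def] by measurable

lemma lyap_le_max: "lyap y \<le> ennreal lyap_max"
proof (cases "y \<le> x + h")
  case True
  have "lyap_base + (x + h + A - max y x) / \<epsilon> \<le> lyap_base + (x + h + A - x) / \<epsilon>"
    using eps_pos by (intro add_left_mono divide_right_mono) auto
  also have "\<dots> = lyap_max" using lyap_base_plus by (simp add: add.commute)
  finally show ?thesis using True unfolding lyap_def by (simp add: ennreal_leI)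
next
  case False
  have "ennreal lyap_max * hit_prob (x + h) y \<le> ennreal lyap_max * 1"
    by (intro mult_left_mono hit_prob_le_1) simp
  then show ?thesis using False unfolding lyap_def by simp
qed

lemma lyap_le_hit_prob: "lyap w \<le> ennreal lyap_max * hit_prob (x + h) w"
  using lyap_le_max[of w] hit_prob_below[of w "x + h"] by (cases "w \<le> x + h") (auto simp: lyap_def)

text \<open>Above \<open>t = x + h\<close>, \<open>lyap\<close> is at most \<open>c' (1 - \<delta>) = c\<close>, so everywhere it is
  dominated by the affine function \<open>c + ramp t / \<epsilon>\<close>.\<close>

lemma lyap_le_ramp: "lyap w \<le> ennreal (lyap_base + ramp (x + h) w / \<epsilon>)"
proof (cases "w \<le> x + h")
  case True
  have "lyap_base + (x + h + A - max w x) / \<epsilon> \<le> lyap_base + ramp (x + h) w / \<epsilon>"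
    unfolding ramp_def using True eps_pos by (intro add_left_mono divide_right_mono) auto
  then show ?thesis using True unfolding lyap_def by (simp add: ennreal_leI)
next
  case False
  have "ennreal lyap_max * hit_prob (x + h) w \<le> ennreal lyap_max * ennreal (1 - \<delta>)"
    using False by (intro mult_left_mono hit_prob_above) auto
  also have "\<dots> = ennreal lyap_base"
    unfolding lyap_base_def using lyap_max_nonneg delta_le_1 by (simp add: ennreal_mult)
  finally show ?thesis using False unfolding lyap_def ramp_def by simp
qed

text \<open>On the interval itself the affine part pays for the indicator.\<close>

lemma lyap_drift_interval:
  assumes y: "x < y" "y \<le> x + h"
  shows "1 + (\<integral>\<^sup>+w. lyap w \<partial>K y) \<le> lyap y"
proof -
  interpret Ky: prob_space "K y" by (rule prob_space_kernel)
  let ?\<phi> = "\<lambda>w. lyap_base + ramp (x + h) w / \<epsilon>"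
  note int_ramp = ramp_drift(1)[OF y(2)] and mean_ramp = ramp_drift(2)[OF y(2)]
  have ramp_mean_nonneg: "0 \<le> (\<integral>w. ramp (x + h) w \<partial>K y)"
    by (rule integral_nonneg_AE) (simp add: ramp_nonneg)
  have "(\<integral>\<^sup>+w. lyap w \<partial>K y) \<le> (\<integral>\<^sup>+w. ennreal (?\<phi> w) \<partial>K y)"
    by (intro nn_integral_mono lyap_le_ramp)
  also have "\<dots> = ennreal (\<integral>w. ?\<phi> w \<partial>K y)"
    using int_ramp lyap_base_nonneg ramp_nonneg eps_pos
    by (intro nn_integral_eq_integral) auto
  also have "(\<integral>w. ?\<phi> w \<partial>K y) = lyap_base + (\<integral>w. ramp (x + h) w \<partial>K y) / \<epsilon>"
    using int_ramp by (simp add: Ky.prob_space)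
  finally have "(\<integral>\<^sup>+w. lyap w \<partial>K y) \<le> ennreal (lyap_base + (\<integral>w. ramp (x + h) w \<partial>K y) / \<epsilon>)" .
  then have "1 + (\<integral>\<^sup>+w. lyap w \<partial>K y)
      \<le> ennreal 1 + ennreal (lyap_base + (\<integral>w. ramp (x + h) w \<partial>K y) / \<epsilon>)"
    by (simp add: add_left_mono)
  also have "\<dots> = ennreal (1 + (lyap_base + (\<integral>w. ramp (x + h) w \<partial>K y) / \<epsilon>))"
    using lyap_base_nonneg ramp_mean_nonneg eps_pos by (simp add: ennreal_plus)
  also have "\<dots> \<le> ennreal (lyap_base + (x + h + A - y) / \<epsilon>)"
  proof (rule ennreal_leI)
    have "1 + (lyap_base + (\<integral>w. ramp (x + h) w \<partial>K y) / \<epsilon>)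
        \<le> 1 + (lyap_base + (x + h + A - y - \<epsilon>) / \<epsilon>)"
      using mean_ramp eps_pos by (simp add: divide_right_mono)
    also have "\<dots> = lyap_base + (x + h + A - y) / \<epsilon>" using eps_pos by (simp add: field_simps)
    finally show "1 + (lyap_base + (\<integral>w. ramp (x + h) w \<partial>K y) / \<epsilon>) \<le> \<dots>" .
  qed
  also have "\<dots> = lyap y" using y unfolding lyap_def by simp
  finally show ?thesis .
qed

text \<open>The Lyapunov inequality (indicator of \<open>(x, t]\<close>) + \<open>K lyap \<le> lyap\<close>: above \<open>t\<close> by harmonicity
  of the return probability, below \<open>x\<close> because \<open>lyap\<close> attains its maximum there.\<close>

lemma lyap_drift: "indicator {x<..x + h} y + (\<integral>\<^sup>+w. lyap w \<partial>K y) \<le> lyap y"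
proof -
  consider "x + h < y" | "y \<le> x" | "x < y \<and> y \<le> x + h" by linarith
  then show ?thesis
  proof cases
    case above: 1
    have "(\<integral>\<^sup>+w. lyap w \<partial>K y) \<le> (\<integral>\<^sup>+w. ennreal lyap_max * hit_prob (x + h) w \<partial>K y)"
      by (intro nn_integral_mono lyap_le_hit_prob)
    also have "\<dots> = ennreal lyap_max * (\<integral>\<^sup>+w. hit_prob (x + h) w \<partial>K y)"
      by (rule nn_integral_cmult) (simp add: measurable_cong_sets[OF sets_kernel refl])
    also have "\<dots> = lyap y" using above by (simp add: lyap_def hit_prob_harmonic[OF above])
    finally show ?thesis using above by simp
  next
    case below: 2
    have "(\<integral>\<^sup>+w. lyap w \<partial>K y) \<le> (\<integral>\<^sup>+w. ennreal lyap_max \<partial>K y)"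
      by (intro nn_integral_mono lyap_le_max)
    also have "\<dots> = lyap y"
      using below h_pos lyap_base_plus unfolding lyap_def
      by (simp add: nn_integral_kernel_const max_def add.commute)
    finally show ?thesis using below by simp
  next
    case 3
    then show ?thesis using lyap_drift_interval by simp
  qed
qed

lemma renewal_interval_bound:
  assumes \<mu>: "prob_space \<mu>" "sets \<mu> = sets borel"
  shows "renewal \<mu> K {x<..x + h} \<le> ennreal ((A + h) / (\<epsilon> * \<delta>))"
proof -
  interpret chain: real_markov_chain K \<mu>
    by (intro real_markov_chain.intro real_kernel_axioms real_markov_chain_axioms.intro \<mu>)
  have "renewal \<mu> K {x<..x + h} \<le> ennreal lyap_max"
    by (intro chain.renewal_le_lyapunov[where F = lyap] lyap_measurable lyap_le_max lyap_drift) simp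
  then show ?thesis unfolding lyap_max_def .
qed

end

end

theorem theorem2:
  fixes \<mu> :: "real measure" and K :: "real \<Rightarrow> real measure" and A \<epsilon> \<delta> :: real
  assumes K: "K \<in> borel \<rightarrow>\<^sub>M prob_algebra borel"
    and mu: "prob_space \<mu>" "sets \<mu> = sets borel"
    and A: "A > 0"
    and eps_pos: "\<epsilon> > 0"
    and eps_int: "\<And>x. integrable (K x) (\<lambda>y. min (y - x) A)"
    and eps_bound: "\<And>x. \<epsilon> \<le> (\<integral>y. min (y - x) A \<partial>K x)"
    and delta_pos: "\<delta> > 0"
    and delta_bound: "\<And>x. \<delta> \<le> measure (markov_path (return borel x) K)
              {\<omega> \<in> space (markov_path (return borel x) K). \<forall>n\<ge>1. \<omega> n > x}"
  shows "(\<forall>x h. h > 0 \<longrightarrow> renewal \<mu> K {x<..x + h} \<le> ennreal ((A + h) / (\<epsilon> * \<delta>)))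
         \<and> (SUP k::int. renewal \<mu> K {real_of_int k<..real_of_int k + 1}) < \<infinity>"
proof -
  interpret renewal_hypotheses K A \<epsilon> \<delta>
    by unfold_locales (fact K A eps_pos eps_int eps_bound delta_pos delta_bound)+
  have bound: "renewal \<mu> K {x<..x + h} \<le> ennreal ((A + h) / (\<epsilon> * \<delta>))" if "h > 0" for x h
    by (rule renewal_interval_bound[OF that mu])
  have "(SUP k::int. renewal \<mu> K {real_of_int k<..real_of_int k + 1}) \<le> ennreal ((A + 1) / (\<epsilon> * \<delta>))"
    by (rule SUP_least) (rule bound, simp)
  also have "\<dots> < \<infinity>" by simp
  finally show ?thesis using bound by blast
qed

end
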